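(* Let $I$ be an index set of non-measurable cardinality and $H$ the group $\mathbb Z^{(I)}$ with the topology of pointwise convergence on $\mathbb Z^I$. Let $\bar t\in\mathbb T^I$ be such that $\bar t(i)=\frac{p_i}{q_i}t_0$ (modulo $1$) for all $i\in I$, where $p_i,q_i$ are relatively prime integers for each $i$, and $t_0$ is either an irrational number or $1$. Then $\bar t\in\widehat H$ if and only if the family $(|q_i|)_{i\in I}$ is bounded.
   Context: $\mathbb Z^{(I)}$ is the group of finitely supported functions $I\to\mathbb Z$, paired with $\mathbb Z^I$ by $\langle\bar g,\bar x\rangle=\sum_i\bar g(i)\bar x(i)$; $H$ carries the weakest topology making all maps $\bar g\mapsto\langle\bar g,\bar x\rangle\in\mathbb Z$ ($\mathbb Z$ discrete) continuous. $\mathbb T=\mathbb R/\mathbb Z$, identified with $(-1/2,1/2]$. An element $\bar t\in\mathbb T^I$ is identified with the homomorphism $H\to\mathbb T$, $\bar g\mapsto\sum_i\bar g(i)\bar t(i)$, and $\widehat H$ (continuous homomorphisms $H\to\mathbb T$) is thereby a subgroup of $\mathbb T^I$. *)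

theory Defs
  imports "HOL-Analysis.Analysis"
begin

text \<open>Ulam non-measurability of the cardinality of the index set (type 'i):
  every countably complete ultrafilter on the index set is principal.\<close>
definition nonmeasurable_card :: "'i set \<Rightarrow> bool" where
  "nonmeasurable_card I \<longleftrightarrow>
     (\<forall>U :: 'i set set.
        (U \<subseteq> Pow I \<and> I \<in> U \<and> {} \<notin> U
         \<and> (\<forall>A B. A \<in> U \<and> A \<subseteq> B \<and> B \<subseteq> I \<longrightarrow> B \<in> U)
         \<and> (\<forall>F :: nat \<Rightarrow> 'i set. range F \<subseteq> U \<longrightarrow> \<Inter>(range F) \<in> U)
         \<and> (\<forall>A. A \<subseteq> I \<longrightarrow> A \<in> U \<or> I - A \<in> U))
        \<longrightarrow> (\<exists>i\<in>I. \<forall>A. A \<subseteq> I \<longrightarrow> (A \<in> U \<longleftrightarrow> i \<in> A)))"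

definition Zsum :: "('i \<Rightarrow> int) set" where
  "Zsum = {g. finite {i. g i \<noteq> 0}}"

definition pairing :: "('i \<Rightarrow> int) \<Rightarrow> ('i \<Rightarrow> 'a::comm_ring_1) \<Rightarrow> 'a" where
  "pairing g x = (\<Sum>i\<in>{i. g i \<noteq> 0}. of_int (g i) * x i)"

text \<open>Weakest topology on Z^(I) making all g \<mapsto> <g,x> \<in> Z (discrete) continuous:
  generated by the preimages of singletons.\<close>
definition H_top :: "('i \<Rightarrow> int) topology" where
  "H_top = topology_generated_by
     {{g \<in> Zsum. pairing g x = n} | (x :: 'i \<Rightarrow> int) n. True}"

text \<open>t \<in> T^I (represented by real representatives) lies in the dual group iff the
  homomorphism g \<mapsto> \<Sum> g(i) t(i) (mod 1) is continuous. The circle group T = R/Z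
  is identified with the unit circle via s \<mapsto> exp(2 \<pi> i s).\<close>
definition in_dual :: "('i \<Rightarrow> real) \<Rightarrow> bool" where
  "in_dual t \<longleftrightarrow>
     continuous_map H_top euclidean (\<lambda>g. cis (2 * pi * pairing g t))"

end

theory Submission
  imports Defs
begin

text \<open>
  If \<open>|q i| \<le> N\<close> for all \<open>i\<close>, put \<open>M = N!\<close> and \<open>x i = (M div q i) * p i\<close>; then
  \<open>\<langle>g, t\<rangle> \<equiv> (t0 / M) * \<langle>g, x\<rangle>\<close> modulo 1, so the character factors through the
  continuous map \<open>g \<mapsto> \<langle>g, x\<rangle>\<close> into the discrete group \<open>\<int>\<close>.

  Conversely, if the character is continuous, some basic neighbourhood of 0, i.e. the
  annihilator of a finite set \<open>F \<subseteq> \<int>\<^sup>I\<close>, is mapped into the right half plane. Being a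
  subgroup, it is then mapped to 1, so \<open>\<langle>h, t\<rangle> \<in> \<int>\<close> on it. Eliminating the finitely
  many constraints of \<open>F\<close> one at a time gives \<open>D \<noteq> 0\<close> and a finite \<open>A \<subseteq> I\<close> such that
  for every \<open>i \<notin> A\<close> the annihilator contains some \<open>h\<close> with \<open>h i = D\<close> supported in
  \<open>{i} \<union> A\<close>. Then \<open>\<langle>h, t\<rangle> = r t0 + (integer)\<close> with \<open>r = \<Sum> h j p j / q j\<close> rational, so
  \<open>r \<in> \<int>\<close> (as \<open>t0\<close> is irrational or 1), and clearing the denominators \<open>q a\<close>, \<open>a \<in> A\<close>,
  shows that \<open>q i\<close> divides \<open>D\<close> times the product of the \<open>q a\<close>.
\<close>

definition annihilator :: "('i \<Rightarrow> int) set \<Rightarrow> ('i \<Rightarrow> int) set" where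
  "annihilator F = {h \<in> Zsum. \<forall>x\<in>F. pairing h x = 0}"

lemma pairing_eq_sum:
  assumes "finite S" "{i. g i \<noteq> 0} \<subseteq> S"
  shows "pairing g x = (\<Sum>i\<in>S. of_int (g i) * x i)"
  unfolding pairing_def by (rule sum.mono_neutral_left) (use assms in auto)

lemma pairing_zero [simp]: "pairing (\<lambda>_. 0) x = 0"
  by (simp add: pairing_def)

lemma pairing_zero_right [simp]: "pairing g (\<lambda>_. 0) = 0"
  by (simp add: pairing_def)

lemma pairing_lincomb_right:
  "pairing g (\<lambda>j. a * x j + b * y j) = a * pairing g x + b * pairing g y"
  by (simp add: pairing_def sum.distrib sum_distrib_left algebra_simps)

lemma pairing_of_int: "pairing g (\<lambda>j. of_int (x j)) = of_int (pairing g x)"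
  by (simp add: pairing_def)

lemma pairing_in_Ints: "(\<And>j. x j \<in> \<int>) \<Longrightarrow> pairing g x \<in> \<int>"
  unfolding pairing_def by (intro Ints_sum Ints_mult) auto

lemma Zsum_lincomb:
  assumes "g1 \<in> Zsum" "g2 \<in> Zsum"
  shows "(\<lambda>j. a * g1 j + b * g2 j) \<in> Zsum"
proof -
  have "{j. a * g1 j + b * g2 j \<noteq> 0} \<subseteq> {j. g1 j \<noteq> 0} \<union> {j. g2 j \<noteq> 0}" by auto
  then show ?thesis using assms unfolding Zsum_def by (auto intro: finite_subset)
qed

lemma pairing_lincomb:
  assumes "g1 \<in> Zsum" "g2 \<in> Zsum"
  shows "pairing (\<lambda>j. a * g1 j + b * g2 j) x = of_int a * pairing g1 x + of_int b * pairing g2 x"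
proof -
  define S where "S = {j. g1 j \<noteq> 0} \<union> {j. g2 j \<noteq> 0}"
  have S: "finite S" "{j. g1 j \<noteq> 0} \<subseteq> S" "{j. g2 j \<noteq> 0} \<subseteq> S"
    "{j. a * g1 j + b * g2 j \<noteq> 0} \<subseteq> S"
    using assms unfolding S_def Zsum_def by auto
  have "pairing (\<lambda>j. a * g1 j + b * g2 j) x = (\<Sum>j\<in>S. of_int (a * g1 j + b * g2 j) * x j)"
    by (rule pairing_eq_sum[OF S(1,4)])
  also have "\<dots> = of_int a * (\<Sum>j\<in>S. of_int (g1 j) * x j) + of_int b * (\<Sum>j\<in>S. of_int (g2 j) * x j)"
    by (simp add: sum.distrib sum_distrib_left algebra_simps)
  also have "\<dots> = of_int a * pairing g1 x + of_int b * pairing g2 x"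
    by (simp only: pairing_eq_sum[OF S(1,2)] pairing_eq_sum[OF S(1,3)])
  finally show ?thesis .
qed

lemma pairing_scale:
  assumes "g \<in> Zsum"
  shows "pairing (\<lambda>j. c * g j) x = of_int c * pairing g x"
  using pairing_lincomb[OF assms assms, of c 0 x] by simp

lemma annihilator_lincomb:
  assumes "g1 \<in> annihilator F" "g2 \<in> annihilator F"
  shows "(\<lambda>j. a * g1 j + b * g2 j) \<in> annihilator F"
  using assms by (simp add: annihilator_def Zsum_lincomb pairing_lincomb)

lemma annihilator_scale:
  assumes "h \<in> annihilator F"
  shows "(\<lambda>j. c * h j) \<in> annihilator F"
  using annihilator_lincomb[OF assms assms, of c 0] by simp

lemma annihilator_Un: "annihilator (F \<union> G) = annihilator F \<inter> annihilator G"
  by (auto simp: annihilator_def)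

lemma annihilator_insert:
  "h \<in> annihilator (insert x F) \<longleftrightarrow> h \<in> annihilator F \<and> pairing h x = 0"
  by (auto simp: annihilator_def)

lemma openin_H_top:
  "openin H_top U \<longleftrightarrow> generate_topology_on {{g \<in> Zsum. pairing g x = n} | (x :: 'i \<Rightarrow> int) n. True} U"
  by (simp add: H_top_def openin_topology_generated_by_iff)

lemma topspace_H_top: "topspace H_top = Zsum"
proof -
  have "Zsum \<in> {{g \<in> Zsum. pairing g x = n} | (x :: 'i \<Rightarrow> int) n. True}"
    by (intro CollectI exI[of _ "\<lambda>_. 0"] exI[of _ 0]) simp
  then show ?thesis unfolding H_top_def topology_generated_by_topspace by blast
qed

lemma openin_H_top_contains_annihilator:
  assumes "openin H_top U" "(\<lambda>_. 0) \<in> U"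
  shows "\<exists>F :: ('i \<Rightarrow> int) set. finite F \<and> annihilator F \<subseteq> U"
proof -
  have "generate_topology_on {{g \<in> Zsum. pairing g x = n} | (x :: 'i \<Rightarrow> int) n. True} U"
    using assms(1) by (simp only: openin_H_top)
  then show ?thesis using assms(2)
  proof (induction rule: generate_topology_on.induct)
    case (Int U V)
    obtain F :: "('i \<Rightarrow> int) set" where "finite F" "annihilator F \<subseteq> U"
      using Int.IH(1) Int.prems by blast
    moreover obtain G :: "('i \<Rightarrow> int) set" where "finite G" "annihilator G \<subseteq> V"
      using Int.IH(2) Int.prems by blast
    ultimately show ?case by (intro exI[of _ "F \<union> G"]) (auto simp: annihilator_Un)
  next
    case (UN K)
    then obtain V where "V \<in> K" "(\<lambda>_. 0) \<in> V" by blast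
    with UN.IH obtain F :: "('i \<Rightarrow> int) set" where "finite F" "annihilator F \<subseteq> V"
      by blast
    with \<open>V \<in> K\<close> show ?case by blast
  next
    case (Basis U)
    then obtain x :: "'i \<Rightarrow> int" and n where U: "U = {g \<in> Zsum. pairing g x = n}"
      by blast
    with Basis.prems have "U = {g \<in> Zsum. pairing g x = 0}" by simp
    then show ?case by (intro exI[of _ "{x}"]) (simp add: annihilator_def)
  qed simp
qed

lemma continuous_map_H_top_through_pairing:
  fixes x :: "'i \<Rightarrow> int" and f :: "int \<Rightarrow> 'a::topological_space"
  shows "continuous_map H_top euclidean (\<lambda>g. f (pairing g x))"
  unfolding continuous_map
proof (intro conjI allI impI)
  fix U :: "'a set"
  have "{g \<in> topspace H_top. f (pairing g x) \<in> U} = (\<Union>n\<in>{n. f n \<in> U}. {g \<in> Zsum. pairing g x = n})"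
    by (auto simp: topspace_H_top)
  also have "generate_topology_on {{g \<in> Zsum. pairing g x = n} | (x :: 'i \<Rightarrow> int) n. True} \<dots>"
    by (rule generate_topology_on.UN) (auto intro: generate_topology_on.Basis)
  finally show "openin H_top {g \<in> topspace H_top. f (pairing g x) \<in> U}"
    by (simp only: openin_H_top)
qed auto

lemma cos_2pi_nonpos:
  assumes "1/4 \<le> y" "y \<le> 3/4"
  shows "cos (2 * pi * y) \<le> 0"
proof -
  have "2 * pi * (1/4) \<le> 2 * pi * y" "2 * pi * y \<le> 2 * pi * (3/4)"
    using assms by (simp_all add: mult_left_mono)
  then have "0 \<le> cos (2 * pi * y - pi)"
    by (intro cos_ge_zero) linarith+
  then show ?thesis
    using cos_periodic_pi[of "2 * pi * y - pi"] by simp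
qed

lemma cos_2pi_mult_dist_round:
  fixes n :: int
  shows "cos (2 * pi * (of_int n * s)) = cos (2 * pi * (of_int n * \<bar>s - round s\<bar>))"
proof -
  have "2 * pi * (of_int n * s) = 2 * pi * (of_int n * (s - round s)) + 2 * pi * of_int (n * round s)"
    by (simp add: algebra_simps)
  then have "cos (2 * pi * (of_int n * s)) = cos (2 * pi * (of_int n * (s - round s)))"
    using sin_cos_eq_iff by blast
  also have "\<dots> = cos (2 * pi * (of_int n * \<bar>s - round s\<bar>))"
    by (metis abs_if cos_minus mult_minus_right)
  finally show ?thesis .
qed

lemma exists_multiple_in_middle_quarters:
  fixes d :: real
  assumes "0 < d" "d \<le> 1/2"
  obtains n :: nat where "0 < n" "1/4 \<le> n * d" "n * d \<le> 3/4"
proof -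
  define n where "n = nat \<lceil>1 / (4 * d)\<rceil>"
  have "real n = of_int \<lceil>1 / (4 * d)\<rceil>"
    using assms(1) by (simp add: n_def)
  then have lower: "1 / (4 * d) \<le> n" and upper: "n < 1 / (4 * d) + 1"
    using ceiling_correct[of "1 / (4 * d)"] by linarith+
  show ?thesis
  proof
    have "0 < 1 / (4 * d)" using assms(1) by simp
    with lower show "0 < n" by linarith
    from lower show "1/4 \<le> n * d"
      using assms(1) by (simp add: field_simps)
    from upper show "n * d \<le> 3/4"
      using assms by (simp add: field_simps)
  qed
qed

lemma Ints_if_cos_multiples_pos:
  assumes "\<And>n::nat. 0 < n \<Longrightarrow> 0 < cos (2 * pi * (real n * s))"
  shows "s \<in> \<int>"
proof (rule ccontr)
  assume "s \<notin> \<int>"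
  then have "0 < \<bar>s - round s\<bar>"
    by (metis Ints_of_int zero_less_abs_iff right_minus_eq)
  moreover have "\<bar>s - round s\<bar> \<le> 1/2"
    using of_int_round_abs_le[of s] by (simp add: abs_minus_commute)
  ultimately obtain n :: nat where n: "0 < n" "1/4 \<le> n * \<bar>s - round s\<bar>" "n * \<bar>s - round s\<bar> \<le> 3/4"
    by (rule exists_multiple_in_middle_quarters)
  have "cos (2 * pi * (n * s)) = cos (2 * pi * (n * \<bar>s - round s\<bar>))"
    using cos_2pi_mult_dist_round[of "int n" s] by simp
  also have "\<dots> \<le> 0"
    using n by (intro cos_2pi_nonpos)
  finally show False using assms[OF n(1)] by simp
qed

definition almost_scaled_units :: "('i \<Rightarrow> int) set \<Rightarrow> int \<Rightarrow> 'i set \<Rightarrow> bool" where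
  "almost_scaled_units S D A \<longleftrightarrow>
     (\<forall>i. i \<notin> A \<longrightarrow> (\<exists>h\<in>S. h i = D \<and> {j. h j \<noteq> 0} \<subseteq> insert i A))"

lemma almost_scaled_units_annihilator_insert:
  fixes x :: "'i \<Rightarrow> int"
  assumes "D \<noteq> 0" "finite A" "almost_scaled_units (annihilator F) D A"
  shows "\<exists>D' A'. D' \<noteq> 0 \<and> finite A' \<and> almost_scaled_units (annihilator (insert x F)) D' A'"
proof -
  have "\<forall>i. \<exists>h. i \<notin> A \<longrightarrow>
      h \<in> annihilator F \<and> h i = D \<and> {j. h j \<noteq> 0} \<subseteq> insert i A"
    using assms(3) unfolding almost_scaled_units_def by blast
  then obtain H where H: "\<forall>i. i \<notin> A \<longrightarrow>
      H i \<in> annihilator F \<and> H i i = D \<and> {j. H i j \<noteq> 0} \<subseteq> insert i A"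
    by (rule choice[THEN exE])
  show ?thesis
  proof (cases "\<exists>c. c \<notin> A \<and> pairing (H c) x \<noteq> 0")
    case False
    have "almost_scaled_units (annihilator (insert x F)) D A"
      unfolding almost_scaled_units_def
    proof (intro allI impI)
      fix i assume "i \<notin> A"
      with H False show "\<exists>h\<in>annihilator (insert x F). h i = D \<and> {j. h j \<noteq> 0} \<subseteq> insert i A"
        by (intro bexI[of _ "H i"]) (auto simp: annihilator_insert)
    qed
    with assms(1,2) show ?thesis by (intro exI[of _ D] exI[of _ A]) simp
  next
    case True
    then obtain c where c: "c \<notin> A" "pairing (H c) x \<noteq> 0" by blast
    define y where "y i = pairing (H i) x" for i
    have "\<exists>h\<in>annihilator (insert x F). h i = y c * D \<and> {j. h j \<noteq> 0} \<subseteq> insert i (insert c A)"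
      if i: "i \<notin> insert c A" for i
    proof
      let ?h = "\<lambda>j. y c * H i j + (- y i) * H c j"
      have Hi: "H i \<in> annihilator F" "H i i = D" "{j. H i j \<noteq> 0} \<subseteq> insert i A"
        using H i by auto
      have Hc: "H c \<in> annihilator F" "{j. H c j \<noteq> 0} \<subseteq> insert c A"
        using H c by auto
      have "H i \<in> Zsum" "H c \<in> Zsum"
        using Hi(1) Hc(1) by (simp_all add: annihilator_def)
      from pairing_lincomb[OF this, of "y c" "- y i" x] have "pairing ?h x = 0"
        by (simp add: y_def)
      then show "?h \<in> annihilator (insert x F)"
        using annihilator_lincomb[OF Hi(1) Hc(1), of "y c" "- y i"] by (simp add: annihilator_insert)
      have "H c i = 0" using Hc(2) i by auto
      then have "?h i = y c * D" using Hi(2) by simp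
      moreover have "{j. ?h j \<noteq> 0} \<subseteq> {j. H i j \<noteq> 0} \<union> {j. H c j \<noteq> 0}" by auto
      ultimately show "?h i = y c * D \<and> {j. ?h j \<noteq> 0} \<subseteq> insert i (insert c A)"
        using Hi(3) Hc(2) by blast
    qed
    then have "almost_scaled_units (annihilator (insert x F)) (y c * D) (insert c A)"
      by (simp add: almost_scaled_units_def)
    moreover have "y c * D \<noteq> 0" using assms(1) c(2) by (simp add: y_def)
    ultimately show ?thesis
      using assms(2) by (intro exI[of _ "y c * D"] exI[of _ "insert c A"]) simp
  qed
qed

lemma annihilator_almost_scaled_units:
  fixes F :: "('i \<Rightarrow> int) set"
  assumes "finite F"
  shows "\<exists>D A. D \<noteq> 0 \<and> finite A \<and> almost_scaled_units (annihilator F) D A"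
  using assms
proof (induction F rule: finite_induct)
  case empty
  have "almost_scaled_units (annihilator ({} :: ('i \<Rightarrow> int) set)) 1 {}"
    unfolding almost_scaled_units_def
  proof (intro allI impI)
    fix i :: 'i
    let ?e = "\<lambda>j. if j = i then 1 else 0 :: int"
    have "?e \<in> annihilator {}" by (simp add: annihilator_def Zsum_def)
    then show "\<exists>h\<in>annihilator {}. h i = 1 \<and> {j. h j \<noteq> 0} \<subseteq> insert i {}"
      by (intro bexI[of _ ?e]) auto
  qed
  then show ?case by (intro exI[of _ "1::int"] exI[of _ "{}"]) simp
next
  case (insert x F)
  then obtain D A where "D \<noteq> 0" "finite A" "almost_scaled_units (annihilator F) D A"
    by blast
  then show ?case
    by (rule almost_scaled_units_annihilator_insert)
qed

lemma Ints_if_Rats_mult_Ints: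
  fixes r t0 :: real
  assumes "r \<in> \<rat>" "r * t0 \<in> \<int>" "t0 \<notin> \<rat> \<or> t0 = 1"
  shows "r \<in> \<int>"
proof (cases "t0 = 1 \<or> r = 0")
  case False
  then have "t0 = (r * t0) / r" "t0 \<notin> \<rat>" using assms(3) by auto
  moreover have "(r * t0) / r \<in> \<rat>"
    using assms(1,2) Ints_subset_Rats by (blast intro: Rats_divide)
  ultimately show ?thesis by simp
qed (use assms in auto)

lemma dvd_if_sum_of_fractions_in_Ints:
  fixes u q :: "'i \<Rightarrow> int"
  assumes "finite A" "i \<notin> A" "\<And>j. j \<in> insert i A \<Longrightarrow> q j \<noteq> 0"
    and sum_Ints: "(\<Sum>j\<in>insert i A. of_int (u j) / of_int (q j) :: real) \<in> \<int>"
  shows "q i dvd (\<Prod>a\<in>A. q a) * u i"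
proof -
  define Q where "Q = (\<Prod>a\<in>A. q a)"
  have summand_Ints: "of_int Q * (of_int (u a) / of_int (q a)) \<in> (\<int> :: real set)" if "a \<in> A" for a
  proof -
    have "Q = q a * (\<Prod>b\<in>A - {a}. q b)"
      unfolding Q_def using that assms(1) by (simp add: prod.remove)
    then have "of_int Q * (of_int (u a) / of_int (q a)) = (of_int (u a * (\<Prod>b\<in>A - {a}. q b)) :: real)"
      using assms(3)[of a] that by (simp add: field_simps)
    then show ?thesis by (metis Ints_of_int)
  qed
  have "of_int Q * (of_int (u i) / of_int (q i)) =
      of_int Q * (\<Sum>j\<in>insert i A. of_int (u j) / of_int (q j))
      - (\<Sum>a\<in>A. of_int Q * (of_int (u a) / of_int (q a)) :: real)"
    using assms(1,2) by (simp add: sum_distrib_left distrib_left)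
  also have "\<dots> \<in> \<int>"
    by (rule Ints_diff[OF Ints_mult[OF Ints_of_int sum_Ints] Ints_sum[OF summand_Ints]])
  finally obtain m where "of_int Q * (of_int (u i) / of_int (q i)) = (of_int m :: real)"
    by (auto elim: Ints_cases)
  then have "Q * u i = m * q i"
    using assms(3)[of i] by (simp add: field_simps flip: of_int_mult of_int_eq_iff)
  then show ?thesis unfolding Q_def by (metis dvd_triv_right)
qed

lemma in_dual_if_pairing_factors:
  fixes t :: "'i \<Rightarrow> real" and x :: "'i \<Rightarrow> int"
  assumes "\<And>g. g \<in> Zsum \<Longrightarrow> pairing g t - c * of_int (pairing g x) \<in> \<int>"
  shows "in_dual t"
  unfolding in_dual_def
proof (rule continuous_map_eq[OF continuous_map_H_top_through_pairing])
  fix g :: "'i \<Rightarrow> int" assume "g \<in> topspace H_top"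
  then have "cis (2 * pi * (pairing g t - c * of_int (pairing g x))) = 1"
    using assms by (simp add: topspace_H_top)
  then show "cis (2 * pi * (c * of_int (pairing g x))) = cis (2 * pi * pairing g t)"
    by (metis cis_mult diff_add_cancel distrib_left mult_1)
qed

lemma in_dual_imp_annihilator_pairing_Ints:
  fixes t :: "'i \<Rightarrow> real"
  assumes "in_dual t"
  obtains F :: "('i \<Rightarrow> int) set" where "finite F" "\<And>h. h \<in> annihilator F \<Longrightarrow> pairing h t \<in> \<int>"
proof -
  have "openin H_top {g \<in> topspace H_top. cis (2 * pi * pairing g t) \<in> {z. 0 < Re z}}"
    using assms unfolding in_dual_def
    by (rule openin_continuous_map_preimage) (simp add: open_halfspace_Re_gt)
  then have "openin H_top {g \<in> Zsum. 0 < cos (2 * pi * pairing g t)}"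
    by (simp add: topspace_H_top)
  moreover have "(\<lambda>_. 0) \<in> {g \<in> Zsum. 0 < cos (2 * pi * pairing g t)}"
    by (simp add: Zsum_def)
  ultimately obtain F :: "('i \<Rightarrow> int) set"
    where F: "finite F" "annihilator F \<subseteq> {g \<in> Zsum. 0 < cos (2 * pi * pairing g t)}"
    using openin_H_top_contains_annihilator by blast
  have "pairing h t \<in> \<int>" if h: "h \<in> annihilator F" for h
  proof (rule Ints_if_cos_multiples_pos)
    fix n :: nat
    have "h \<in> Zsum" using h by (simp add: annihilator_def)
    then have "pairing (\<lambda>j. int n * h j) t = real n * pairing h t"
      by (simp add: pairing_scale)
    moreover have "(\<lambda>j. int n * h j) \<in> annihilator F"
      using h by (rule annihilator_scale)
    ultimately show "0 < cos (2 * pi * (real n * pairing h t))"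
      using F(2) by auto
  qed
  with F(1) show ?thesis by (rule that)
qed

lemma denominator_dvd_if_pairing_in_Ints:
  fixes t :: "'i \<Rightarrow> real" and p q h :: "'i \<Rightarrow> int" and t0 :: real
  assumes cop: "\<And>i. coprime (p i) (q i)"
    and q0: "\<And>i. q i \<noteq> 0"
    and tk: "\<And>i. t i - (of_int (p i) / of_int (q i)) * t0 \<in> \<int>"
    and t0: "t0 \<notin> \<rat> \<or> t0 = 1"
    and A: "finite A" "i \<notin> A" and supp: "{j. h j \<noteq> 0} \<subseteq> insert i A"
    and "pairing h t \<in> \<int>"
  shows "q i dvd (\<Prod>a\<in>A. q a) * h i"
proof -
  define r where "r = pairing h (\<lambda>j. of_int (p j) / of_int (q j) :: real)"
  define k where "k j = t j - (of_int (p j) / of_int (q j)) * t0" for j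
  have "pairing h t = t0 * r + 1 * pairing h k"
    unfolding r_def by (subst pairing_lincomb_right[symmetric]) (simp add: k_def mult.commute)
  then have "r * t0 = pairing h t - pairing h k"
    by simp
  moreover have "pairing h k \<in> \<int>"
    using tk by (simp add: pairing_in_Ints k_def)
  ultimately have "r * t0 \<in> \<int>"
    using \<open>pairing h t \<in> \<int>\<close> by simp
  moreover have "r \<in> \<rat>"
    unfolding r_def pairing_def by (intro Rats_sum Rats_mult Rats_divide) auto
  ultimately have "r \<in> \<int>"
    using t0 by (blast intro: Ints_if_Rats_mult_Ints)
  moreover have "r = (\<Sum>j\<in>insert i A. of_int (h j * p j) / of_int (q j))"
    unfolding r_def by (subst pairing_eq_sum[OF _ supp]) (simp_all add: A)
  ultimately have "q i dvd (\<Prod>a\<in>A. q a) * (h i * p i)"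
    using A q0 by (intro dvd_if_sum_of_fractions_in_Ints) auto
  then show ?thesis
    using cop[of i] by (simp add: mult.assoc[symmetric] coprime_commute coprime_dvd_mult_left_iff)
qed

lemma in_dual_imp_bdd_denominators:
  fixes t :: "'i \<Rightarrow> real" and p q :: "'i \<Rightarrow> int" and t0 :: real
  assumes "in_dual t"
    and cop: "\<And>i. coprime (p i) (q i)"
    and q0: "\<And>i. q i \<noteq> 0"
    and tk: "\<And>i. t i - (of_int (p i) / of_int (q i)) * t0 \<in> \<int>"
    and t0: "t0 \<notin> \<rat> \<or> t0 = 1"
  shows "bdd_above (range (\<lambda>i. \<bar>q i\<bar>))"
proof -
  obtain F :: "('i \<Rightarrow> int) set" where "finite F"
    and F: "\<And>h. h \<in> annihilator F \<Longrightarrow> pairing h t \<in> \<int>"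
    using in_dual_imp_annihilator_pairing_Ints[OF assms(1)] by blast
  obtain D A where "D \<noteq> 0" "finite A" and units: "almost_scaled_units (annihilator F) D A"
    using annihilator_almost_scaled_units[OF \<open>finite F\<close>] by blast
  define B where "B = \<bar>(\<Prod>a\<in>A. q a) * D\<bar>"
  have "\<bar>q i\<bar> \<le> B" if i: "i \<notin> A" for i
  proof -
    obtain h where h: "h \<in> annihilator F" "h i = D" "{j. h j \<noteq> 0} \<subseteq> insert i A"
      using units i unfolding almost_scaled_units_def by blast
    have "q i dvd (\<Prod>a\<in>A. q a) * D"
      using denominator_dvd_if_pairing_in_Ints[OF cop q0 tk t0 \<open>finite A\<close> i h(3) F[OF h(1)]] h(2)
      by simp
    moreover have "(\<Prod>a\<in>A. q a) * D \<noteq> 0"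
      using q0 \<open>finite A\<close> \<open>D \<noteq> 0\<close> by simp
    ultimately show ?thesis
      unfolding B_def by (simp add: dvd_imp_le_int)
  qed
  then have "range (\<lambda>i. \<bar>q i\<bar>) \<subseteq> (\<lambda>i. \<bar>q i\<bar>) ` A \<union> {..B}"
    by auto
  moreover have "bdd_above ((\<lambda>i. \<bar>q i\<bar>) ` A \<union> {..B})"
    using \<open>finite A\<close> by (simp add: bdd_above_finite)
  ultimately show ?thesis
    by (rule bdd_above_mono[rotated])
qed

lemma bdd_denominators_imp_in_dual:
  fixes t :: "'i \<Rightarrow> real" and p q :: "'i \<Rightarrow> int" and t0 :: real
  assumes "bdd_above (range (\<lambda>i. \<bar>q i\<bar>))"
    and q0: "\<And>i. q i \<noteq> 0"
    and tk: "\<And>i. t i - (of_int (p i) / of_int (q i)) * t0 \<in> \<int>"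
  shows "in_dual t"
proof -
  obtain N where N: "\<And>i. \<bar>q i\<bar> \<le> N"
    using assms(1) by (auto simp: bdd_above_def)
  define M :: int where "M = fact (nat N)"
  have "M \<noteq> 0" by (simp add: M_def)
  have "q i dvd M" for i
  proof -
    have "nat \<bar>q i\<bar> dvd fact (nat N)"
      using q0[of i] N[of i] by (intro dvd_fact) auto
    then have "int (nat \<bar>q i\<bar>) dvd int (fact (nat N))"
      by (simp only: of_nat_dvd_iff)
    then show ?thesis by (simp add: M_def of_nat_fact)
  qed
  define x where "x i = M div q i * p i" for i
  define k where "k i = t i - (of_int (p i) / of_int (q i)) * t0" for i
  have "t = (\<lambda>i. t0 / of_int M * of_int (x i) + 1 * k i)"
  proof
    fix i
    show "t i = t0 / of_int M * of_int (x i) + 1 * k i"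
      using \<open>q i dvd M\<close> q0[of i] \<open>M \<noteq> 0\<close> by (simp add: x_def k_def of_int_div field_simps)
  qed
  then have "pairing g t = t0 / of_int M * of_int (pairing g x) + pairing g k" for g
    using pairing_lincomb_right[of g "t0 / of_int M" "\<lambda>i. of_int (x i)" 1 k] by (simp add: pairing_of_int)
  then have "pairing g t - t0 / of_int M * of_int (pairing g x) \<in> \<int>" for g
    using tk by (simp add: pairing_in_Ints k_def)
  then show ?thesis by (rule in_dual_if_pairing_factors)
qed

theorem lemma4p14:
  fixes t :: "'i \<Rightarrow> real" and p q :: "'i \<Rightarrow> int" and t0 :: real
  assumes "nonmeasurable_card (UNIV :: 'i set)"
    and "\<And>i. coprime (p i) (q i)"
    and "\<And>i. q i \<noteq> 0"
    and "\<And>i. t i - (of_int (p i) / of_int (q i)) * t0 \<in> \<int>"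
    and "t0 \<notin> \<rat> \<or> t0 = 1"
  shows "in_dual t \<longleftrightarrow> bdd_above (range (\<lambda>i. \<bar>q i\<bar>))"
proof
  assume "in_dual t"
  then show "bdd_above (range (\<lambda>i. \<bar>q i\<bar>))"
    by (rule in_dual_imp_bdd_denominators[OF _ assms(2-5)])
next
  assume "bdd_above (range (\<lambda>i. \<bar>q i\<bar>))"
  then show "in_dual t"
    by (rule bdd_denominators_imp_in_dual[OF _ assms(3,4)])
qed

end
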